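(* Let $R$ be a semiring, $i:M\to N$ a normal monomorphism of $R$-modules (identify $M$ with the saturated submodule $i(M)$ of $N$), and $L$ a saturated submodule of $M$. Then $L$ is a saturated submodule of $N$; the projections $\pi:M\to M/L$ and $\pi':N\to N/L$ are normal epimorphisms; the induced map $i':M/L\to N/L$, $[m]\mapsto[i(m)]$, is a well-defined normal monomorphism; and the commutative square with top $i$, left $\pi$, right $\pi'$, bottom $i'$ is both a pullback and a pushout in $\mathrm{Mod}_R$.
   Context: Semirings are commutative with $0,1$; an $R$-module is a commutative monoid with $R$-action. A submodule $N$ of $M$ is saturated if $x+y\in N$ and $y\in N$ imply $x\in N$. For a submodule $K\subseteq M$, $M/K$ is the set of classes of the congruence $x\sim y\iff x+k=y+k'$ for some $k,k'\in K$. A morphism is a normal monomorphism (resp. normal epimorphism) if it is the equalizer (resp. coequalizer) of some morphism and the zero map. *)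

theory Defs
  imports Main
begin

record ('r, 'a) smod =
  mcarrier :: "'a set"
  madd :: "'a \<Rightarrow> 'a \<Rightarrow> 'a"
  mzero :: 'a
  msmult :: "'r \<Rightarrow> 'a \<Rightarrow> 'a"

definition semimodule :: "('r::comm_semiring_1, 'a) smod \<Rightarrow> bool" where
  "semimodule M \<longleftrightarrow>
     mzero M \<in> mcarrier M \<and>
     (\<forall>x\<in>mcarrier M. \<forall>y\<in>mcarrier M. madd M x y \<in> mcarrier M) \<and>
     (\<forall>r. \<forall>x\<in>mcarrier M. msmult M r x \<in> mcarrier M) \<and>
     (\<forall>x\<in>mcarrier M. \<forall>y\<in>mcarrier M. \<forall>z\<in>mcarrier M.
        madd M (madd M x y) z = madd M x (madd M y z)) \<and>
     (\<forall>x\<in>mcarrier M. \<forall>y\<in>mcarrier M. madd M x y = madd M y x) \<and>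
     (\<forall>x\<in>mcarrier M. madd M x (mzero M) = x) \<and>
     (\<forall>r. \<forall>x\<in>mcarrier M. \<forall>y\<in>mcarrier M.
        msmult M r (madd M x y) = madd M (msmult M r x) (msmult M r y)) \<and>
     (\<forall>r s. \<forall>x\<in>mcarrier M. msmult M (r + s) x = madd M (msmult M r x) (msmult M s x)) \<and>
     (\<forall>r s. \<forall>x\<in>mcarrier M. msmult M (r * s) x = msmult M r (msmult M s x)) \<and>
     (\<forall>x\<in>mcarrier M. msmult M 1 x = x) \<and>
     (\<forall>x\<in>mcarrier M. msmult M 0 x = mzero M) \<and>
     (\<forall>r. msmult M r (mzero M) = mzero M)"

text \<open>Morphisms of R-modules; a morphism is a HOL function, only its values on
the carrier matter.\<close>

definition smod_hom :: "('r::comm_semiring_1, 'a) smod \<Rightarrow> ('r, 'b) smod \<Rightarrow> ('a \<Rightarrow> 'b) \<Rightarrow> bool" where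
  "smod_hom M N f \<longleftrightarrow>
     (\<forall>x\<in>mcarrier M. f x \<in> mcarrier N) \<and>
     (\<forall>x\<in>mcarrier M. \<forall>y\<in>mcarrier M. f (madd M x y) = madd N (f x) (f y)) \<and>
     f (mzero M) = mzero N \<and>
     (\<forall>r. \<forall>x\<in>mcarrier M. f (msmult M r x) = msmult N r (f x))"

definition submodule :: "('r::comm_semiring_1, 'a) smod \<Rightarrow> 'a set \<Rightarrow> bool" where
  "submodule M K \<longleftrightarrow> K \<subseteq> mcarrier M \<and> mzero M \<in> K \<and>
     (\<forall>x\<in>K. \<forall>y\<in>K. madd M x y \<in> K) \<and> (\<forall>r. \<forall>x\<in>K. msmult M r x \<in> K)"

definition saturated_submodule :: "('r::comm_semiring_1, 'a) smod \<Rightarrow> 'a set \<Rightarrow> bool" where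
  "saturated_submodule M K \<longleftrightarrow> submodule M K \<and>
     (\<forall>x\<in>mcarrier M. \<forall>y\<in>mcarrier M. madd M x y \<in> K \<and> y \<in> K \<longrightarrow> x \<in> K)"

definition qrel :: "('r, 'a) smod \<Rightarrow> 'a set \<Rightarrow> 'a \<Rightarrow> 'a \<Rightarrow> bool" where
  "qrel M K x y \<longleftrightarrow> x \<in> mcarrier M \<and> y \<in> mcarrier M \<and>
     (\<exists>k\<in>K. \<exists>k'\<in>K. madd M x k = madd M y k')"

definition qclass :: "('r, 'a) smod \<Rightarrow> 'a set \<Rightarrow> 'a \<Rightarrow> 'a set" where
  "qclass M K x = {y. qrel M K x y}"

definition quotient :: "('r, 'a) smod \<Rightarrow> 'a set \<Rightarrow> ('r, 'a set) smod" where
  "quotient M K =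
     \<lparr> mcarrier = qclass M K ` mcarrier M,
       madd = (\<lambda>A B. qclass M K (madd M (SOME a. a \<in> A) (SOME b. b \<in> B))),
       mzero = qclass M K (mzero M),
       msmult = (\<lambda>r A. qclass M K (msmult M r (SOME a. a \<in> A))) \<rparr>"

text \<open>The universal properties quantify over test objects P whose carrier lives in
the type 'p, given as an explicit type argument.\<close>

definition is_kernel ::
  "'p itself \<Rightarrow> ('r::comm_semiring_1, 'a) smod \<Rightarrow> ('r, 'b) smod \<Rightarrow> ('r, 'q) smod
     \<Rightarrow> ('a \<Rightarrow> 'b) \<Rightarrow> ('b \<Rightarrow> 'q) \<Rightarrow> bool" where
  "is_kernel (_ :: 'p itself) M N Q f g \<longleftrightarrow>
     semimodule M \<and> semimodule N \<and> semimodule Q \<and>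
     smod_hom M N f \<and> smod_hom N Q g \<and>
     (\<forall>x\<in>mcarrier M. g (f x) = mzero Q) \<and>
     (\<forall>(P :: ('r, 'p) smod) h. semimodule P \<and> smod_hom P N h \<and>
        (\<forall>x\<in>mcarrier P. g (h x) = mzero Q) \<longrightarrow>
        (\<exists>u. smod_hom P M u \<and> (\<forall>x\<in>mcarrier P. f (u x) = h x)) \<and>
        (\<forall>u v. smod_hom P M u \<and> smod_hom P M v \<and>
            (\<forall>x\<in>mcarrier P. f (u x) = h x) \<and> (\<forall>x\<in>mcarrier P. f (v x) = h x) \<longrightarrow>
            (\<forall>x\<in>mcarrier P. u x = v x)))"

definition is_cokernel ::
  "'p itself \<Rightarrow> ('r::comm_semiring_1, 'q) smod \<Rightarrow> ('r, 'a) smod \<Rightarrow> ('r, 'b) smod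
     \<Rightarrow> ('q \<Rightarrow> 'a) \<Rightarrow> ('a \<Rightarrow> 'b) \<Rightarrow> bool" where
  "is_cokernel (_ :: 'p itself) Q M N g f \<longleftrightarrow>
     semimodule Q \<and> semimodule M \<and> semimodule N \<and>
     smod_hom Q M g \<and> smod_hom M N f \<and>
     (\<forall>x\<in>mcarrier Q. f (g x) = mzero N) \<and>
     (\<forall>(P :: ('r, 'p) smod) h. semimodule P \<and> smod_hom M P h \<and>
        (\<forall>x\<in>mcarrier Q. h (g x) = mzero P) \<longrightarrow>
        (\<exists>u. smod_hom N P u \<and> (\<forall>x\<in>mcarrier M. u (f x) = h x)) \<and>
        (\<forall>u v. smod_hom N P u \<and> smod_hom N P v \<and>
            (\<forall>x\<in>mcarrier M. u (f x) = h x) \<and> (\<forall>x\<in>mcarrier M. v (f x) = h x) \<longrightarrow>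
            (\<forall>y\<in>mcarrier N. u y = v y)))"

definition is_pullback ::
  "'p itself \<Rightarrow> ('r::comm_semiring_1, 'a) smod \<Rightarrow> ('r, 'b) smod \<Rightarrow> ('r, 'c) smod \<Rightarrow> ('r, 'd) smod
     \<Rightarrow> ('a \<Rightarrow> 'b) \<Rightarrow> ('a \<Rightarrow> 'c) \<Rightarrow> ('b \<Rightarrow> 'd) \<Rightarrow> ('c \<Rightarrow> 'd) \<Rightarrow> bool" where
  "is_pullback (_ :: 'p itself) A B C D p q f g \<longleftrightarrow>
     semimodule A \<and> semimodule B \<and> semimodule C \<and> semimodule D \<and>
     smod_hom A B p \<and> smod_hom A C q \<and> smod_hom B D f \<and> smod_hom C D g \<and>
     (\<forall>x\<in>mcarrier A. f (p x) = g (q x)) \<and>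
     (\<forall>(P :: ('r, 'p) smod) h k. semimodule P \<and> smod_hom P B h \<and> smod_hom P C k \<and>
        (\<forall>x\<in>mcarrier P. f (h x) = g (k x)) \<longrightarrow>
        (\<exists>u. smod_hom P A u \<and> (\<forall>x\<in>mcarrier P. p (u x) = h x \<and> q (u x) = k x)) \<and>
        (\<forall>u v. smod_hom P A u \<and> smod_hom P A v \<and>
            (\<forall>x\<in>mcarrier P. p (u x) = h x \<and> q (u x) = k x) \<and>
            (\<forall>x\<in>mcarrier P. p (v x) = h x \<and> q (v x) = k x) \<longrightarrow>
            (\<forall>x\<in>mcarrier P. u x = v x)))"

definition is_pushout ::
  "'p itself \<Rightarrow> ('r::comm_semiring_1, 'a) smod \<Rightarrow> ('r, 'b) smod \<Rightarrow> ('r, 'c) smod \<Rightarrow> ('r, 'd) smod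
     \<Rightarrow> ('a \<Rightarrow> 'b) \<Rightarrow> ('a \<Rightarrow> 'c) \<Rightarrow> ('b \<Rightarrow> 'd) \<Rightarrow> ('c \<Rightarrow> 'd) \<Rightarrow> bool" where
  "is_pushout (_ :: 'p itself) A B C D p q f g \<longleftrightarrow>
     semimodule A \<and> semimodule B \<and> semimodule C \<and> semimodule D \<and>
     smod_hom A B p \<and> smod_hom A C q \<and> smod_hom B D f \<and> smod_hom C D g \<and>
     (\<forall>x\<in>mcarrier A. f (p x) = g (q x)) \<and>
     (\<forall>(P :: ('r, 'p) smod) h k. semimodule P \<and> smod_hom B P h \<and> smod_hom C P k \<and>
        (\<forall>x\<in>mcarrier A. h (p x) = k (q x)) \<longrightarrow>
        (\<exists>u. smod_hom D P u \<and> (\<forall>x\<in>mcarrier B. u (f x) = h x) \<and>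
             (\<forall>x\<in>mcarrier C. u (g x) = k x)) \<and>
        (\<forall>u v. smod_hom D P u \<and> smod_hom D P v \<and>
            (\<forall>x\<in>mcarrier B. u (f x) = h x) \<and> (\<forall>x\<in>mcarrier C. u (g x) = k x) \<and>
            (\<forall>x\<in>mcarrier B. v (f x) = h x) \<and> (\<forall>x\<in>mcarrier C. v (g x) = k x) \<longrightarrow>
            (\<forall>y\<in>mcarrier D. u y = v y)))"

end

theory Submission
  imports Defs
begin

text \<open>A normal monomorphism is an injective morphism with saturated image. Everything then
  rests on two properties of the congruence modulo i(L) on N: on i(M) it is the image of the
  congruence modulo L (by injectivity), and a class meeting i(M) lies inside i(M) (by
  saturation). The first makes i' injective, the second makes its image
  saturated, so i' is again a normal monomorphism. For the pullback, a compatible pair of maps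
  into N and M/L lands in i(M) and lifts along i; for the pushout, a map out of N that kills
  i(L) factors through N/L.\<close>

lemma semimodule_zero: "semimodule X \<Longrightarrow> mzero X \<in> mcarrier X"
  by (simp add: semimodule_def)
lemma semimodule_add_closed:
  "semimodule X \<Longrightarrow> x \<in> mcarrier X \<Longrightarrow> y \<in> mcarrier X \<Longrightarrow> madd X x y \<in> mcarrier X"
  by (simp add: semimodule_def)
lemma semimodule_smult_closed: "semimodule X \<Longrightarrow> x \<in> mcarrier X \<Longrightarrow> msmult X r x \<in> mcarrier X"
  by (simp add: semimodule_def)
lemma semimodule_add_assoc:
  "semimodule X \<Longrightarrow> x \<in> mcarrier X \<Longrightarrow> y \<in> mcarrier X \<Longrightarrow> z \<in> mcarrier X \<Longrightarrow>
   madd X (madd X x y) z = madd X x (madd X y z)"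
  unfolding semimodule_def by blast
lemma semimodule_add_commute:
  "semimodule X \<Longrightarrow> x \<in> mcarrier X \<Longrightarrow> y \<in> mcarrier X \<Longrightarrow> madd X x y = madd X y x"
  by (simp add: semimodule_def)
lemma semimodule_add_left_commute:
  "semimodule X \<Longrightarrow> x \<in> mcarrier X \<Longrightarrow> y \<in> mcarrier X \<Longrightarrow> z \<in> mcarrier X \<Longrightarrow>
   madd X x (madd X y z) = madd X y (madd X x z)"
  by (metis semimodule_add_assoc semimodule_add_commute)
lemma semimodule_add_zero_right: "semimodule X \<Longrightarrow> x \<in> mcarrier X \<Longrightarrow> madd X x (mzero X) = x"
  by (simp add: semimodule_def)
lemma semimodule_add_zero_left: "semimodule X \<Longrightarrow> x \<in> mcarrier X \<Longrightarrow> madd X (mzero X) x = x"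
  by (metis semimodule_add_commute semimodule_add_zero_right semimodule_zero)
lemma semimodule_smult_add:
  "semimodule X \<Longrightarrow> x \<in> mcarrier X \<Longrightarrow> y \<in> mcarrier X \<Longrightarrow>
   msmult X r (madd X x y) = madd X (msmult X r x) (msmult X r y)"
  by (simp add: semimodule_def)
lemma semimodule_add_smult:
  "semimodule X \<Longrightarrow> x \<in> mcarrier X \<Longrightarrow> msmult X (r + s) x = madd X (msmult X r x) (msmult X s x)"
  by (simp add: semimodule_def)
lemma semimodule_mult_smult:
  "semimodule X \<Longrightarrow> x \<in> mcarrier X \<Longrightarrow> msmult X (r * s) x = msmult X r (msmult X s x)"
  by (simp add: semimodule_def)
lemma semimodule_one_smult: "semimodule X \<Longrightarrow> x \<in> mcarrier X \<Longrightarrow> msmult X 1 x = x"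
  by (simp add: semimodule_def)
lemma semimodule_zero_smult: "semimodule X \<Longrightarrow> x \<in> mcarrier X \<Longrightarrow> msmult X 0 x = mzero X"
  by (simp add: semimodule_def)
lemma semimodule_smult_zero: "semimodule X \<Longrightarrow> msmult X r (mzero X) = mzero X"
  by (simp add: semimodule_def)

lemmas semimodule_add_ac = semimodule_add_assoc semimodule_add_commute semimodule_add_left_commute

lemma smod_hom_closed: "smod_hom M N f \<Longrightarrow> x \<in> mcarrier M \<Longrightarrow> f x \<in> mcarrier N"
  by (simp add: smod_hom_def)
lemma smod_hom_add:
  "smod_hom M N f \<Longrightarrow> x \<in> mcarrier M \<Longrightarrow> y \<in> mcarrier M \<Longrightarrow> f (madd M x y) = madd N (f x) (f y)"
  by (simp add: smod_hom_def)
lemma smod_hom_zero: "smod_hom M N f \<Longrightarrow> f (mzero M) = mzero N"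
  by (simp add: smod_hom_def)
lemma smod_hom_smult: "smod_hom M N f \<Longrightarrow> x \<in> mcarrier M \<Longrightarrow> f (msmult M r x) = msmult N r (f x)"
  by (simp add: smod_hom_def)

lemma submodule_subset: "submodule X K \<Longrightarrow> K \<subseteq> mcarrier X"
  by (simp add: submodule_def)
lemma submodule_zero: "submodule X K \<Longrightarrow> mzero X \<in> K"
  by (simp add: submodule_def)
lemma submodule_add: "submodule X K \<Longrightarrow> x \<in> K \<Longrightarrow> y \<in> K \<Longrightarrow> madd X x y \<in> K"
  by (simp add: submodule_def)
lemma submodule_smult: "submodule X K \<Longrightarrow> x \<in> K \<Longrightarrow> msmult X r x \<in> K"
  by (simp add: submodule_def)

lemma saturated_submoduleD:
  "saturated_submodule X K \<Longrightarrow> x \<in> mcarrier X \<Longrightarrow> y \<in> mcarrier X \<Longrightarrow>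
   madd X x y \<in> K \<Longrightarrow> y \<in> K \<Longrightarrow> x \<in> K"
  unfolding saturated_submodule_def by blast

lemma submodule_restrict_semimodule:
  assumes X: "semimodule X" and K: "submodule X K"
  shows "semimodule (X\<lparr>mcarrier := K\<rparr>)"
proof -
  have restrict: "mcarrier (X\<lparr>mcarrier := K\<rparr>) = K" "madd (X\<lparr>mcarrier := K\<rparr>) = madd X"
    "mzero (X\<lparr>mcarrier := K\<rparr>) = mzero X" "msmult (X\<lparr>mcarrier := K\<rparr>) = msmult X"
    by simp_all
  have in_carrier: "x \<in> K \<Longrightarrow> x \<in> mcarrier X" for x
    using submodule_subset[OF K] by blast
  show ?thesis
    unfolding semimodule_def restrict
    using submodule_zero[OF K] submodule_add[OF K] submodule_smult[OF K]
    by (simp add: in_carrier semimodule_add_ac[OF X] semimodule_add_zero_right[OF X]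
        semimodule_smult_add[OF X] semimodule_add_smult[OF X]
        semimodule_mult_smult[OF X] semimodule_one_smult[OF X] semimodule_zero_smult[OF X]
        semimodule_smult_zero[OF X])
qed

lemma smod_hom_image_submodule:
  assumes f: "smod_hom M N f" and K: "submodule M K"
  shows "submodule N (f ` K)"
  unfolding submodule_def
proof (intro conjI ballI allI)
  show "f ` K \<subseteq> mcarrier N"
    using smod_hom_closed[OF f] submodule_subset[OF K] by blast
  show "mzero N \<in> f ` K"
    using smod_hom_zero[OF f] submodule_zero[OF K] by (metis image_eqI)
  fix x y assume "x \<in> f ` K" "y \<in> f ` K"
  then obtain a b where ab: "a \<in> K" "b \<in> K" and "x = f a" "y = f b" by blast
  moreover have "a \<in> mcarrier M" "b \<in> mcarrier M" using ab submodule_subset[OF K] by auto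
  ultimately have "madd N x y = f (madd M a b)" using smod_hom_add[OF f] by simp
  then show "madd N x y \<in> f ` K" using submodule_add[OF K ab] by blast
next
  fix r x assume "x \<in> f ` K"
  then obtain a where a: "a \<in> K" and "x = f a" by blast
  moreover have "a \<in> mcarrier M" using a submodule_subset[OF K] by auto
  ultimately have "msmult N r x = f (msmult M r a)" using smod_hom_smult[OF f] by simp
  then show "msmult N r x \<in> f ` K" using submodule_smult[OF K a] by blast
qed

lemma semimodule_carrier_submodule: "semimodule X \<Longrightarrow> submodule X (mcarrier X)"
  by (simp add: submodule_def semimodule_def)

lemma semimodule_surjective_image:
  assumes X: "semimodule X" and f: "smod_hom X Y f" and onto: "mcarrier Y = f ` mcarrier X"
  shows "semimodule Y"
proof -
  have add: "madd Y (f x) (f y) = f (madd X x y)"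
    and smult: "msmult Y r (f x) = f (msmult X r x)"
    if "x \<in> mcarrier X" "y \<in> mcarrier X" for x y r
    using that smod_hom_add[OF f] smod_hom_smult[OF f] by simp_all
  have zero: "mzero Y = f (mzero X)" using smod_hom_zero[OF f] by simp
  show ?thesis
    unfolding semimodule_def onto Ball_image_comp comp_def zero
    using semimodule_zero[OF X] semimodule_add_closed[OF X] semimodule_smult_closed[OF X]
    by (simp add: add smult semimodule_add_ac[OF X] semimodule_add_zero_right[OF X]
        semimodule_smult_add[OF X] semimodule_add_smult[OF X] semimodule_mult_smult[OF X]
        semimodule_one_smult[OF X] semimodule_zero_smult[OF X]
        semimodule_smult_zero[OF X])
qed

section \<open>Quotients by a submodule\<close>

context
  fixes X :: "('r::comm_semiring_1, 'a) smod" and K :: "'a set"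
  assumes X: "semimodule X" and K: "submodule X K"
begin

lemma qrel_refl: "x \<in> mcarrier X \<Longrightarrow> qrel X K x x"
  unfolding qrel_def using submodule_zero[OF K] by blast

lemma qrel_sym: "qrel X K x y \<Longrightarrow> qrel X K y x"
  unfolding qrel_def by metis

lemma qrel_trans:
  assumes "qrel X K x y" "qrel X K y z"
  shows "qrel X K x z"
proof -
  from assms obtain k1 k2 k3 k4 where k: "k1 \<in> K" "k2 \<in> K" "k3 \<in> K" "k4 \<in> K"
    and e1: "madd X x k1 = madd X y k2" and e2: "madd X y k3 = madd X z k4"
    and xyz: "x \<in> mcarrier X" "y \<in> mcarrier X" "z \<in> mcarrier X"
    unfolding qrel_def by blast
  have kc: "k1 \<in> mcarrier X" "k2 \<in> mcarrier X" "k3 \<in> mcarrier X" "k4 \<in> mcarrier X"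
    using k submodule_subset[OF K] by auto
  note ac = semimodule_add_ac[OF X] semimodule_add_closed[OF X]
  have "madd X x (madd X k1 k3) = madd X (madd X x k1) k3" using xyz kc by (simp add: ac)
  also have "\<dots> = madd X (madd X y k3) k2" unfolding e1 using xyz kc by (simp add: ac)
  also have "\<dots> = madd X z (madd X k4 k2)" unfolding e2 using xyz kc by (simp add: ac)
  finally show ?thesis
    unfolding qrel_def using xyz k submodule_add[OF K] by blast
qed

lemma qrel_add:
  assumes "qrel X K x x'" "qrel X K y y'"
  shows "qrel X K (madd X x y) (madd X x' y')"
proof -
  from assms obtain k1 k2 k3 k4 where k: "k1 \<in> K" "k2 \<in> K" "k3 \<in> K" "k4 \<in> K"
    and e1: "madd X x k1 = madd X x' k2" and e2: "madd X y k3 = madd X y' k4"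
    and c: "x \<in> mcarrier X" "y \<in> mcarrier X" "x' \<in> mcarrier X" "y' \<in> mcarrier X"
    unfolding qrel_def by blast
  have kc: "k1 \<in> mcarrier X" "k2 \<in> mcarrier X" "k3 \<in> mcarrier X" "k4 \<in> mcarrier X"
    using k submodule_subset[OF K] by auto
  note ac = semimodule_add_ac[OF X] semimodule_add_closed[OF X]
  have "madd X (madd X x y) (madd X k1 k3) = madd X (madd X x k1) (madd X y k3)"
    using c kc by (simp add: ac)
  also have "\<dots> = madd X (madd X x' y') (madd X k2 k4)"
    unfolding e1 e2 using c kc by (simp add: ac)
  finally show ?thesis
    unfolding qrel_def using c k submodule_add[OF K] semimodule_add_closed[OF X] by blast
qed

lemma qrel_smult:
  assumes "qrel X K x x'"
  shows "qrel X K (msmult X r x) (msmult X r x')"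
proof -
  from assms obtain k k' where k: "k \<in> K" "k' \<in> K"
    and e: "madd X x k = madd X x' k'" and c: "x \<in> mcarrier X" "x' \<in> mcarrier X"
    unfolding qrel_def by blast
  have "madd X (msmult X r x) (msmult X r k) = madd X (msmult X r x') (msmult X r k')"
    using e c k submodule_subset[OF K] semimodule_smult_add[OF X] by (metis subsetD)
  then show ?thesis
    unfolding qrel_def using c k submodule_smult[OF K] semimodule_smult_closed[OF X] by blast
qed

lemma qclass_eqI:
  assumes "qrel X K x y"
  shows "qclass X K x = qclass X K y"
proof -
  have "qrel X K x z \<longleftrightarrow> qrel X K y z" for z
    using qrel_trans[OF qrel_sym[OF assms]] qrel_trans[OF assms] by blast
  then show ?thesis by (simp add: qclass_def)
qed

lemma qclass_eqD:
  assumes "qclass X K x = qclass X K y" and "x \<in> mcarrier X"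
  shows "qrel X K x y"
proof -
  have "x \<in> qclass X K x" using qrel_refl[OF assms(2)] by (simp add: qclass_def)
  then have "x \<in> qclass X K y" using assms(1) by simp
  then have "qrel X K y x" by (simp add: qclass_def)
  then show ?thesis by (rule qrel_sym)
qed

lemma qrel_some_qclass:
  assumes "x \<in> mcarrier X"
  shows "qrel X K x (SOME a. a \<in> qclass X K x)"
proof -
  have "x \<in> qclass X K x" using qrel_refl assms by (simp add: qclass_def)
  then have "(SOME a. a \<in> qclass X K x) \<in> qclass X K x" by (rule someI)
  then show ?thesis by (simp add: qclass_def)
qed

lemma quotient_carrier: "mcarrier (quotient X K) = qclass X K ` mcarrier X"
  by (simp add: quotient_def)

lemma quotient_zero: "mzero (quotient X K) = qclass X K (mzero X)"
  by (simp add: quotient_def)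

lemma quotient_add_qclass:
  "x \<in> mcarrier X \<Longrightarrow> y \<in> mcarrier X \<Longrightarrow>
   madd (quotient X K) (qclass X K x) (qclass X K y) = qclass X K (madd X x y)"
  unfolding quotient_def smod.simps
  by (intro qclass_eqI qrel_add) (simp_all add: qrel_sym qrel_some_qclass)

lemma quotient_smult_qclass:
  "x \<in> mcarrier X \<Longrightarrow> msmult (quotient X K) r (qclass X K x) = qclass X K (msmult X r x)"
  unfolding quotient_def smod.simps
  by (intro qclass_eqI qrel_smult) (simp_all add: qrel_sym qrel_some_qclass)

lemma qclass_smod_hom: "smod_hom X (quotient X K) (qclass X K)"
  unfolding smod_hom_def quotient_carrier quotient_zero
  using semimodule_add_closed[OF X] semimodule_smult_closed[OF X]
  by (simp add: quotient_add_qclass quotient_smult_qclass)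

lemma quotient_semimodule: "semimodule (quotient X K)"
  using X qclass_smod_hom quotient_carrier by (rule semimodule_surjective_image)

lemma qclass_eq_zero:
  assumes k: "k \<in> K"
  shows "qclass X K k = mzero (quotient X K)"
proof -
  have "k \<in> mcarrier X" using k submodule_subset[OF K] by blast
  then have "madd X k (mzero X) = madd X (mzero X) k"
    using semimodule_add_commute[OF X] semimodule_zero[OF X] by blast
  then have "qrel X K k (mzero X)"
    unfolding qrel_def using k \<open>k \<in> mcarrier X\<close> submodule_zero[OF K] semimodule_zero[OF X] by blast
  then show ?thesis unfolding quotient_zero by (rule qclass_eqI)
qed

lemma quotient_lift:
  assumes P: "semimodule P" and h: "smod_hom X P h" and hK: "\<forall>k\<in>K. h k = mzero P"
  shows "smod_hom (quotient X K) P (\<lambda>A. h (SOME a. a \<in> A))"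
    and "x \<in> mcarrier X \<Longrightarrow> h (SOME a. a \<in> qclass X K x) = h x"
proof -
  have respects: "h x = h y" if "qrel X K x y" for x y
  proof -
    from that obtain k k' where k: "k \<in> K" "k' \<in> K" and e: "madd X x k = madd X y k'"
      and c: "x \<in> mcarrier X" "y \<in> mcarrier X" unfolding qrel_def by blast
    have kc: "k \<in> mcarrier X" "k' \<in> mcarrier X" using k submodule_subset[OF K] by auto
    have "h x = h (madd X x k)"
      using k kc c hK smod_hom_add[OF h] semimodule_add_zero_right[OF P] smod_hom_closed[OF h] by simp
    also have "\<dots> = h (madd X y k')" using e by simp
    also have "\<dots> = h y"
      using k kc c hK smod_hom_add[OF h] semimodule_add_zero_right[OF P] smod_hom_closed[OF h] by simp
    finally show ?thesis .
  qed
  show lift_qclass: "h (SOME a. a \<in> qclass X K x) = h x" if "x \<in> mcarrier X" for x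
    using respects[OF qrel_some_qclass[OF that]] by simp
  show "smod_hom (quotient X K) P (\<lambda>A. h (SOME a. a \<in> A))"
    unfolding smod_hom_def quotient_carrier quotient_zero
    using semimodule_zero[OF X] semimodule_add_closed[OF X] semimodule_smult_closed[OF X]
    by (simp add: quotient_add_qclass quotient_smult_qclass lift_qclass smod_hom_closed[OF h]
        smod_hom_add[OF h] smod_hom_smult[OF h] smod_hom_zero[OF h])
qed

lemma is_cokernel_qclass:
  "is_cokernel TYPE('p) (X\<lparr>mcarrier := K\<rparr>) X (quotient X K) (\<lambda>x. x) (qclass X K)"
  unfolding is_cokernel_def
proof (intro conjI allI impI)
  show "semimodule (X\<lparr>mcarrier := K\<rparr>)" using X K by (rule submodule_restrict_semimodule)
  show "smod_hom (X\<lparr>mcarrier := K\<rparr>) X (\<lambda>x. x)"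
    unfolding smod_hom_def using submodule_subset[OF K] by auto
  show "\<forall>x\<in>mcarrier (X\<lparr>mcarrier := K\<rparr>). qclass X K x = mzero (quotient X K)"
    using qclass_eq_zero by simp
  fix P :: "('r, 'p) smod" and h
  assume "semimodule P \<and> smod_hom X P h \<and> (\<forall>x\<in>mcarrier (X\<lparr>mcarrier := K\<rparr>). h x = mzero P)"
  then have P: "semimodule P" and h: "smod_hom X P h" and hK: "\<forall>k\<in>K. h k = mzero P" by auto
  show "\<exists>u. smod_hom (quotient X K) P u \<and> (\<forall>x\<in>mcarrier X. u (qclass X K x) = h x)"
    using quotient_lift[OF P h hK] by blast
  fix u v
  assume "smod_hom (quotient X K) P u \<and> smod_hom (quotient X K) P v \<and>
    (\<forall>x\<in>mcarrier X. u (qclass X K x) = h x) \<and> (\<forall>x\<in>mcarrier X. v (qclass X K x) = h x)"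
  then show "\<forall>y\<in>mcarrier (quotient X K). u y = v y"
    by (simp add: quotient_carrier)
qed (use X quotient_semimodule qclass_smod_hom in auto)

end

lemma qclass_eq_zero_iff:
  assumes X: "semimodule X" and K: "saturated_submodule X K" and x: "x \<in> mcarrier X"
  shows "qclass X K x = mzero (quotient X K) \<longleftrightarrow> x \<in> K"
proof
  have Ks: "submodule X K" using K by (simp add: saturated_submodule_def)
  assume "qclass X K x = mzero (quotient X K)"
  then have "qrel X K x (mzero X)" using qclass_eqD[OF X Ks] x quotient_zero[OF X Ks] by simp
  then obtain k k' where k: "k \<in> K" "k' \<in> K" and e: "madd X x k = madd X (mzero X) k'"
    unfolding qrel_def by blast
  have kc: "k \<in> mcarrier X" "k' \<in> mcarrier X" using k submodule_subset[OF Ks] by auto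
  have "madd X x k \<in> K" using e k kc semimodule_add_zero_left[OF X] by simp
  then show "x \<in> K" using saturated_submoduleD[OF K x kc(1)] k by blast
next
  assume "x \<in> K"
  then show "qclass X K x = mzero (quotient X K)"
    using K X by (simp add: saturated_submodule_def qclass_eq_zero)
qed

section \<open>Normal monomorphisms\<close>

lemma smod_hom_zero_locus_saturated:
  assumes N: "semimodule N" and Q: "semimodule Q" and g: "smod_hom N Q g"
  shows "saturated_submodule N {n \<in> mcarrier N. g n = mzero Q}"
  unfolding saturated_submodule_def submodule_def
  using semimodule_zero[OF N] semimodule_add_closed[OF N] semimodule_smult_closed[OF N]
    semimodule_zero[OF Q]
  by (auto simp: smod_hom_zero[OF g] smod_hom_add[OF g] smod_hom_smult[OF g] smod_hom_closed[OF g]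
      semimodule_add_zero_right[OF Q] semimodule_smult_zero[OF Q])

locale saturated_embedding =
  fixes M :: "('r::comm_semiring_1, 'a) smod" and N :: "('r, 'b) smod" and i :: "'a \<Rightarrow> 'b"
  assumes M: "semimodule M" and N: "semimodule N" and hom: "smod_hom M N i"
    and inj: "inj_on i (mcarrier M)"
    and image_saturated: "saturated_submodule N (i ` mcarrier M)"
begin

lemma eq_if_image_eq: "a \<in> mcarrier M \<Longrightarrow> b \<in> mcarrier M \<Longrightarrow> i a = i b \<Longrightarrow> a = b"
  using inj by (rule inj_onD)

lemma factor_unique:
  assumes "smod_hom P M u" "smod_hom P M v" "\<forall>x\<in>mcarrier P. i (u x) = i (v x)"
  shows "\<forall>x\<in>mcarrier P. u x = v x"
  using assms smod_hom_closed eq_if_image_eq by metis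

lemma lift_through_image:
  assumes P: "semimodule P" and h: "smod_hom P N h"
    and into_image: "\<forall>x\<in>mcarrier P. h x \<in> i ` mcarrier M"
  shows "smod_hom P M (\<lambda>x. inv_into (mcarrier M) i (h x))"
    and "x \<in> mcarrier P \<Longrightarrow> i (inv_into (mcarrier M) i (h x)) = h x"
proof -
  let ?u = "\<lambda>x. inv_into (mcarrier M) i (h x)"
  have closed: "?u x \<in> mcarrier M" if "x \<in> mcarrier P" for x
    using into_image that by (simp add: inv_into_into)
  show lifts: "i (?u x) = h x" if "x \<in> mcarrier P" for x
    using into_image that by (simp add: f_inv_into_f)
  show "smod_hom P M ?u"
    unfolding smod_hom_def
  proof (intro conjI ballI allI)
    fix x y assume x: "x \<in> mcarrier P" and y: "y \<in> mcarrier P"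
    have "i (?u (madd P x y)) = h (madd P x y)" using x y semimodule_add_closed[OF P] lifts by blast
    also have "\<dots> = madd N (i (?u x)) (i (?u y))" using x y smod_hom_add[OF h] lifts by simp
    also have "\<dots> = i (madd M (?u x) (?u y))" using x y closed smod_hom_add[OF hom] by simp
    finally have "i (?u (madd P x y)) = i (madd M (?u x) (?u y))" .
    then show "?u (madd P x y) = madd M (?u x) (?u y)"
      by (rule eq_if_image_eq[OF closed[OF semimodule_add_closed[OF P x y]]
            semimodule_add_closed[OF M closed[OF x] closed[OF y]]])
  next
    have "i (?u (mzero P)) = h (mzero P)" using semimodule_zero[OF P] lifts by blast
    then have "i (?u (mzero P)) = i (mzero M)" using smod_hom_zero[OF h] smod_hom_zero[OF hom] by simp
    then show "?u (mzero P) = mzero M"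
      by (rule eq_if_image_eq[OF closed[OF semimodule_zero[OF P]] semimodule_zero[OF M]])
  next
    fix r x assume x: "x \<in> mcarrier P"
    have "i (?u (msmult P r x)) = h (msmult P r x)" using x semimodule_smult_closed[OF P] lifts by blast
    also have "\<dots> = msmult N r (i (?u x))" using x smod_hom_smult[OF h] lifts by simp
    also have "\<dots> = i (msmult M r (?u x))" using x closed smod_hom_smult[OF hom] by simp
    finally have "i (?u (msmult P r x)) = i (msmult M r (?u x))" .
    then show "?u (msmult P r x) = msmult M r (?u x)"
      by (rule eq_if_image_eq[OF closed[OF semimodule_smult_closed[OF P x]]
            semimodule_smult_closed[OF M closed[OF x]]])
  qed (rule closed)
qed

lemma is_kernel_qclass_image:
  "is_kernel TYPE('p) M N (quotient N (i ` mcarrier M)) i (qclass N (i ` mcarrier M))"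
  unfolding is_kernel_def
proof (intro conjI allI impI)
  let ?I = "i ` mcarrier M"
  have I: "submodule N ?I" using image_saturated by (simp add: saturated_submodule_def)
  have vanishes_iff: "qclass N ?I y = mzero (quotient N ?I) \<longleftrightarrow> y \<in> ?I" if "y \<in> mcarrier N" for y
    using N image_saturated that by (rule qclass_eq_zero_iff)
  show "semimodule M" "semimodule N" "smod_hom M N i" by (fact M N hom)+
  show "semimodule (quotient N ?I)" using N I by (rule quotient_semimodule)
  show "smod_hom N (quotient N ?I) (qclass N ?I)" using N I by (rule qclass_smod_hom)
  show "\<forall>x\<in>mcarrier M. qclass N ?I (i x) = mzero (quotient N ?I)"
    using vanishes_iff smod_hom_closed[OF hom] by blast
  fix P :: "('r, 'p) smod" and h
  assume "semimodule P \<and> smod_hom P N h \<and> (\<forall>x\<in>mcarrier P. qclass N ?I (h x) = mzero (quotient N ?I))"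
  then have P: "semimodule P" and h: "smod_hom P N h"
    and vanishes: "\<forall>x\<in>mcarrier P. qclass N ?I (h x) = mzero (quotient N ?I)" by simp_all
  have "\<forall>x\<in>mcarrier P. h x \<in> ?I"
    using vanishes vanishes_iff smod_hom_closed[OF h] by simp
  then show "\<exists>u. smod_hom P M u \<and> (\<forall>x\<in>mcarrier P. i (u x) = h x)"
    using lift_through_image[OF P h] by blast
  fix u v
  assume "smod_hom P M u \<and> smod_hom P M v \<and>
    (\<forall>x\<in>mcarrier P. i (u x) = h x) \<and> (\<forall>x\<in>mcarrier P. i (v x) = h x)"
  then have "smod_hom P M u" "smod_hom P M v" "\<forall>x\<in>mcarrier P. i (u x) = i (v x)" by simp_all
  then show "\<forall>x\<in>mcarrier P. u x = v x" by (rule factor_unique)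
qed

end

definition ring_smod :: "('r::comm_semiring_1, 'r) smod" where
  "ring_smod = \<lparr>mcarrier = UNIV, madd = (+), mzero = 0, msmult = (*)\<rparr>"

lemma ring_smod_semimodule: "semimodule ring_smod"
  unfolding semimodule_def ring_smod_def by (simp add: algebra_simps)

lemma smod_hom_from_ring:
  assumes X: "semimodule X" and x: "x \<in> mcarrier X"
  shows "smod_hom ring_smod X (\<lambda>r. msmult X r x)"
  unfolding smod_hom_def ring_smod_def
  using x by (simp add: semimodule_smult_closed[OF X] semimodule_add_smult[OF X]
      semimodule_zero_smult[OF X] semimodule_mult_smult[OF X])

text \<open>The hypothesis only tests the kernel property against the free module R of rank one;
  maps out of R are determined by the image of 1, which yields injectivity and identifies the
  image of i with the zero locus of g.\<close>

lemma is_kernel_saturated_embedding: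
  fixes M :: "('r::comm_semiring_1, 'a) smod"
  assumes K: "is_kernel TYPE('r) M N Q i g"
  shows "saturated_embedding M N i"
proof -
  have M: "semimodule M" and N: "semimodule N" and Q: "semimodule Q" and i: "smod_hom M N i"
    and g: "smod_hom N Q g" and gi: "\<forall>x\<in>mcarrier M. g (i x) = mzero Q"
    and UP: "\<And>(P :: ('r, 'r) smod) h. semimodule P \<Longrightarrow> smod_hom P N h \<Longrightarrow>
        (\<forall>x\<in>mcarrier P. g (h x) = mzero Q) \<Longrightarrow>
        (\<exists>u. smod_hom P M u \<and> (\<forall>x\<in>mcarrier P. i (u x) = h x)) \<and>
        (\<forall>u v. smod_hom P M u \<and> smod_hom P M v \<and>
            (\<forall>x\<in>mcarrier P. i (u x) = h x) \<and> (\<forall>x\<in>mcarrier P. i (v x) = h x) \<longrightarrow>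
            (\<forall>x\<in>mcarrier P. u x = v x))"
    using K unfolding is_kernel_def by blast+
  have R_vanishes: "\<forall>r\<in>mcarrier ring_smod. g (msmult N r n) = mzero Q"
    if "n \<in> mcarrier N" "g n = mzero Q" for n
    using that smod_hom_smult[OF g] semimodule_smult_zero[OF Q] by simp
  have inj: "inj_on i (mcarrier M)"
  proof (rule inj_onI)
    fix a b assume a: "a \<in> mcarrier M" and b: "b \<in> mcarrier M" and e: "i a = i b"
    have ia: "i a \<in> mcarrier N" using smod_hom_closed[OF i a] .
    have unique: "\<forall>r\<in>mcarrier ring_smod. u r = v r"
      if "smod_hom ring_smod M u" "smod_hom ring_smod M v"
        "\<forall>r\<in>mcarrier ring_smod. i (u r) = msmult N r (i a)"
        "\<forall>r\<in>mcarrier ring_smod. i (v r) = msmult N r (i a)" for u v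
      using UP[OF ring_smod_semimodule smod_hom_from_ring[OF N ia] R_vanishes[OF ia]] gi a that
      by blast
    have "\<forall>r\<in>mcarrier ring_smod. msmult M r a = msmult M r b"
      using unique[OF smod_hom_from_ring[OF M a] smod_hom_from_ring[OF M b]]
        smod_hom_smult[OF i a] smod_hom_smult[OF i b] e
      by simp
    then have "msmult M 1 a = msmult M 1 b" by (simp add: ring_smod_def)
    then show "a = b" using semimodule_one_smult[OF M] a b by simp
  qed
  have image: "i ` mcarrier M = {n \<in> mcarrier N. g n = mzero Q}"
  proof (intro equalityI subsetI)
    fix n assume "n \<in> {n \<in> mcarrier N. g n = mzero Q}"
    then have n: "n \<in> mcarrier N" "g n = mzero Q" by auto
    then obtain u where u: "smod_hom ring_smod M u"
      and lifts: "\<forall>r\<in>mcarrier ring_smod. i (u r) = msmult N r n"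
      using UP[OF ring_smod_semimodule smod_hom_from_ring[OF N n(1)] R_vanishes] by blast
    have "i (u 1) = n" using lifts semimodule_one_smult[OF N n(1)] by (simp add: ring_smod_def)
    moreover have "u 1 \<in> mcarrier M" using smod_hom_closed[OF u] by (simp add: ring_smod_def)
    ultimately show "n \<in> i ` mcarrier M" by blast
  qed (use gi smod_hom_closed[OF i] in auto)
  show ?thesis
    using M N i inj smod_hom_zero_locus_saturated[OF N Q g] unfolding image[symmetric]
    by (rule saturated_embedding.intro)
qed

section \<open>Quotienting a normal monomorphism by a saturated submodule\<close>

locale saturated_embedding_quotient = saturated_embedding +
  fixes L :: "'a set"
  assumes L: "saturated_submodule M L"
begin

definition induced where
  "induced A = qclass N (i ` L) (i (SOME m. m \<in> A))"

lemma L_submodule: "submodule M L"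
  using L by (simp add: saturated_submodule_def)

lemma L_subset: "L \<subseteq> mcarrier M"
  using L_submodule by (rule submodule_subset)

lemma image_L_submodule: "submodule N (i ` L)"
  using hom L_submodule by (rule smod_hom_image_submodule)

lemma image_L_saturated: "saturated_submodule N (i ` L)"
  unfolding saturated_submodule_def
proof (intro conjI ballI impI)
  show "submodule N (i ` L)" by (rule image_L_submodule)
  fix x y assume x: "x \<in> mcarrier N" and y: "y \<in> mcarrier N"
    and sum_y: "madd N x y \<in> i ` L \<and> y \<in> i ` L"
  then obtain l l' where l: "l \<in> L" "l' \<in> L" and "madd N x y = i l" "y = i l'" by blast
  have "x \<in> i ` mcarrier M"
    using saturated_submoduleD[OF image_saturated x y] sum_y L_subset by blast
  then obtain a where a: "a \<in> mcarrier M" "x = i a" by blast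
  have "i (madd M a l') = i l"
    using smod_hom_add[OF hom] a l L_subset \<open>madd N x y = i l\<close> \<open>y = i l'\<close> by auto
  then have "madd M a l' = l"
    using eq_if_image_eq a l L_subset semimodule_add_closed[OF M] by blast
  then have "a \<in> L" using saturated_submoduleD[OF L] a l L_subset by blast
  then show "x \<in> i ` L" using a by blast
qed

lemma qrel_image_iff:
  assumes a: "a \<in> mcarrier M" and b: "b \<in> mcarrier M"
  shows "qrel N (i ` L) (i a) (i b) \<longleftrightarrow> qrel M L a b"
proof -
  have "madd N (i a) (i l) = madd N (i b) (i l') \<longleftrightarrow> madd M a l = madd M b l'"
    if "l \<in> L" "l' \<in> L" for l l'
  proof -
    have l: "l \<in> mcarrier M" "l' \<in> mcarrier M" using that L_subset by auto
    then have "madd N (i a) (i l) = i (madd M a l)" "madd N (i b) (i l') = i (madd M b l')"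
      using a b smod_hom_add[OF hom] by simp_all
    then show ?thesis
      using a b l by (simp add: inj_on_eq_iff[OF inj] semimodule_add_closed[OF M])
  qed
  then show ?thesis
    unfolding qrel_def using a b smod_hom_closed[OF hom] by auto
qed

lemma qrel_image_closed:
  assumes n: "n \<in> mcarrier N" and m: "m \<in> mcarrier M" and rel: "qrel N (i ` L) n (i m)"
  shows "n \<in> i ` mcarrier M"
proof -
  obtain l l' where l: "l \<in> L" "l' \<in> L" and e: "madd N n (i l) = madd N (i m) (i l')"
    using rel unfolding qrel_def by blast
  have "madd N n (i l) = i (madd M m l')"
    using e smod_hom_add[OF hom] m l L_subset by auto
  then have "madd N n (i l) \<in> i ` mcarrier M"
    using m l L_subset semimodule_add_closed[OF M] by auto
  then show ?thesis
    using saturated_submoduleD[OF image_saturated n] l L_subset smod_hom_closed[OF hom] by blast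
qed

lemma induced_qclass: "m \<in> mcarrier M \<Longrightarrow> induced (qclass M L m) = qclass N (i ` L) (i m)"
  and induced_hom: "smod_hom (quotient M L) (quotient N (i ` L)) induced"
proof -
  let ?h = "\<lambda>m. qclass N (i ` L) (i m)"
  have h: "smod_hom M (quotient N (i ` L)) ?h"
    using smod_hom_closed[OF hom] smod_hom_add[OF hom] smod_hom_smult[OF hom] smod_hom_zero[OF hom]
      qclass_smod_hom[OF N image_L_submodule]
    unfolding smod_hom_def by simp
  have "\<forall>l\<in>L. ?h l = mzero (quotient N (i ` L))"
    using qclass_eq_zero[OF N image_L_submodule] by blast
  note lift = quotient_lift[OF M L_submodule quotient_semimodule[OF N image_L_submodule] h this]
  show "smod_hom (quotient M L) (quotient N (i ` L)) induced"
    using lift(1) unfolding induced_def[abs_def] .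
  show "m \<in> mcarrier M \<Longrightarrow> induced (qclass M L m) = qclass N (i ` L) (i m)"
    using lift(2) unfolding induced_def .
qed

lemma induced_saturated_embedding:
  "saturated_embedding (quotient M L) (quotient N (i ` L)) induced"
proof
  let ?QM = "quotient M L" and ?QN = "quotient N (i ` L)"
  show QM: "semimodule ?QM" using M L_submodule by (rule quotient_semimodule)
  show QN: "semimodule ?QN" using N image_L_submodule by (rule quotient_semimodule)
  show "smod_hom ?QM ?QN induced" by (rule induced_hom)
  show "inj_on induced (mcarrier ?QM)"
  proof (rule inj_onI)
    fix A B assume "A \<in> mcarrier ?QM" "B \<in> mcarrier ?QM" and e: "induced A = induced B"
    then obtain a b where a: "a \<in> mcarrier M" "A = qclass M L a"
      and b: "b \<in> mcarrier M" "B = qclass M L b"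
      using quotient_carrier[OF M L_submodule] by auto
    have "qrel N (i ` L) (i a) (i b)"
      using e a b induced_qclass qclass_eqD[OF N image_L_submodule] smod_hom_closed[OF hom] by simp
    then show "A = B"
      using a b qrel_image_iff qclass_eqI[OF M L_submodule] by blast
  qed
  have image: "induced ` mcarrier ?QM = qclass N (i ` L) ` i ` mcarrier M"
    using induced_qclass by (force simp: quotient_carrier[OF M L_submodule])
  have class_in_image: "x \<in> i ` mcarrier M"
    if x: "x \<in> mcarrier N" and cls: "qclass N (i ` L) x \<in> induced ` mcarrier ?QM" for x
  proof -
    obtain m where m: "m \<in> mcarrier M" and "qclass N (i ` L) x = qclass N (i ` L) (i m)"
      using cls unfolding image by blast
    then have "qrel N (i ` L) x (i m)" using qclass_eqD[OF N image_L_submodule] x by blast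
    then show ?thesis using qrel_image_closed x m by blast
  qed
  show "saturated_submodule ?QN (induced ` mcarrier ?QM)"
    unfolding saturated_submodule_def
  proof (intro conjI ballI impI)
    show "submodule ?QN (induced ` mcarrier ?QM)"
      using induced_hom semimodule_carrier_submodule[OF QM] by (rule smod_hom_image_submodule)
    fix X Y assume "X \<in> mcarrier ?QN" "Y \<in> mcarrier ?QN"
      and sum_Y: "madd ?QN X Y \<in> induced ` mcarrier ?QM \<and> Y \<in> induced ` mcarrier ?QM"
    then obtain x y where x: "x \<in> mcarrier N" "X = qclass N (i ` L) x"
      and y: "y \<in> mcarrier N" "Y = qclass N (i ` L) y"
      using quotient_carrier[OF N image_L_submodule] by auto
    have "madd N x y \<in> i ` mcarrier M"
      using class_in_image sum_Y x y semimodule_add_closed[OF N]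
        quotient_add_qclass[OF N image_L_submodule] by simp
    moreover have "y \<in> i ` mcarrier M" using class_in_image sum_Y y by simp
    ultimately obtain a where "a \<in> mcarrier M" "x = i a"
      using saturated_submoduleD[OF image_saturated x(1) y(1)] by blast
    then show "X \<in> induced ` mcarrier ?QM"
      unfolding image using x by blast
  qed
qed

lemma is_pullback:
  "is_pullback TYPE('p) M N (quotient M L) (quotient N (i ` L)) i (qclass M L) (qclass N (i ` L)) induced"
  unfolding is_pullback_def
proof (intro conjI allI impI)
  let ?QM = "quotient M L" and ?QN = "quotient N (i ` L)"
  interpret induced: saturated_embedding ?QM ?QN induced by (rule induced_saturated_embedding)
  fix P h k
  assume "semimodule P \<and> smod_hom P N h \<and> smod_hom P ?QM k \<and>
    (\<forall>x\<in>mcarrier P. qclass N (i ` L) (h x) = induced (k x))"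
  then have P: "semimodule P" and h: "smod_hom P N h" and k: "smod_hom P ?QM k"
    and commutes: "\<And>x. x \<in> mcarrier P \<Longrightarrow> qclass N (i ` L) (h x) = induced (k x)" by auto
  have into_image: "\<forall>x\<in>mcarrier P. h x \<in> i ` mcarrier M"
  proof
    fix x assume x: "x \<in> mcarrier P"
    obtain m where m: "m \<in> mcarrier M" "k x = qclass M L m"
      using smod_hom_closed[OF k x] quotient_carrier[OF M L_submodule] by auto
    have "qclass N (i ` L) (h x) = qclass N (i ` L) (i m)"
      using commutes[OF x] m induced_qclass by simp
    then show "h x \<in> i ` mcarrier M"
      using qrel_image_closed smod_hom_closed[OF h x] m qclass_eqD[OF N image_L_submodule] by blast
  qed
  note lift = lift_through_image[OF P h into_image]
  let ?u = "\<lambda>x. inv_into (mcarrier M) i (h x)"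
  have "qclass M L (?u x) = k x" if x: "x \<in> mcarrier P" for x
  proof (rule induced.eq_if_image_eq)
    have "?u x \<in> mcarrier M" using smod_hom_closed[OF lift(1) x] .
    then show "qclass M L (?u x) \<in> mcarrier ?QM"
      using quotient_carrier[OF M L_submodule] by blast
    show "k x \<in> mcarrier ?QM" using smod_hom_closed[OF k x] .
    show "induced (qclass M L (?u x)) = induced (k x)"
      using induced_qclass[OF \<open>?u x \<in> mcarrier M\<close>] lift(2)[OF x] commutes[OF x] by simp
  qed
  then show "\<exists>u. smod_hom P M u \<and> (\<forall>x\<in>mcarrier P. i (u x) = h x \<and> qclass M L (u x) = k x)"
    using lift by blast
  fix u v
  assume "smod_hom P M u \<and> smod_hom P M v \<and>
    (\<forall>x\<in>mcarrier P. i (u x) = h x \<and> qclass M L (u x) = k x) \<and>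
    (\<forall>x\<in>mcarrier P. i (v x) = h x \<and> qclass M L (v x) = k x)"
  then have "smod_hom P M u" "smod_hom P M v" "\<forall>x\<in>mcarrier P. i (u x) = i (v x)" by simp_all
  then show "\<forall>x\<in>mcarrier P. u x = v x" by (rule factor_unique)
qed (use M N hom induced_hom induced_qclass quotient_semimodule qclass_smod_hom
      L_submodule image_L_submodule in auto)

lemma is_pushout:
  "is_pushout TYPE('p) M N (quotient M L) (quotient N (i ` L)) i (qclass M L) (qclass N (i ` L)) induced"
  unfolding is_pushout_def
proof (intro conjI allI impI)
  let ?QM = "quotient M L" and ?QN = "quotient N (i ` L)"
  fix P h k
  assume "semimodule P \<and> smod_hom N P h \<and> smod_hom ?QM P k \<and>
    (\<forall>x\<in>mcarrier M. h (i x) = k (qclass M L x))"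
  then have P: "semimodule P" and h: "smod_hom N P h" and k: "smod_hom ?QM P k"
    and commutes: "\<forall>x\<in>mcarrier M. h (i x) = k (qclass M L x)" by auto
  have "\<forall>y\<in>i ` L. h y = mzero P"
    using commutes L_subset qclass_eq_zero[OF M L_submodule] smod_hom_zero[OF k] by auto
  note lift = quotient_lift[OF N image_L_submodule P h this]
  have "h (SOME a. a \<in> induced C) = k C" if C: "C \<in> mcarrier ?QM" for C
  proof -
    obtain m where "m \<in> mcarrier M" "C = qclass M L m"
      using C quotient_carrier[OF M L_submodule] by auto
    then show ?thesis
      using induced_qclass lift(2) smod_hom_closed[OF hom] commutes by simp
  qed
  then show "\<exists>u. smod_hom ?QN P u \<and> (\<forall>x\<in>mcarrier N. u (qclass N (i ` L) x) = h x) \<and>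
      (\<forall>x\<in>mcarrier ?QM. u (induced x) = k x)"
    using lift by blast
  fix u v
  assume "smod_hom ?QN P u \<and> smod_hom ?QN P v \<and>
    (\<forall>x\<in>mcarrier N. u (qclass N (i ` L) x) = h x) \<and> (\<forall>x\<in>mcarrier ?QM. u (induced x) = k x) \<and>
    (\<forall>x\<in>mcarrier N. v (qclass N (i ` L) x) = h x) \<and> (\<forall>x\<in>mcarrier ?QM. v (induced x) = k x)"
  then show "\<forall>y\<in>mcarrier ?QN. u y = v y"
    by (simp add: quotient_carrier[OF N image_L_submodule])
qed (use M N hom induced_hom induced_qclass quotient_semimodule qclass_smod_hom
      L_submodule image_L_submodule in auto)

end

theorem mainTheorem12:
  fixes M :: "('r::comm_semiring_1, 'a) smod" and N :: "('r, 'b) smod"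
    and Q :: "('r, 'q) smod" and i :: "'a \<Rightarrow> 'b" and g :: "'b \<Rightarrow> 'q"
    and L :: "'a set"
  assumes normal_mono_i: "is_kernel TYPE('r) M N Q i g"
    and L_sat: "saturated_submodule M L"
  defines "\<pi> \<equiv> qclass M L"
    and "\<pi>' \<equiv> qclass N (i ` L)"
    and "i' \<equiv> (\<lambda>A. qclass N (i ` L) (i (SOME m. m \<in> A)))"
  shows "saturated_submodule N (i ` L)
    \<and> (\<exists>(K :: ('r, 'a) smod) e. is_cokernel TYPE('p) K M (quotient M L) e \<pi>)
    \<and> (\<exists>(K :: ('r, 'b) smod) e. is_cokernel TYPE('p) K N (quotient N (i ` L)) e \<pi>')
    \<and> (\<forall>m\<in>mcarrier M. i' (\<pi> m) = \<pi>' (i m))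
    \<and> (\<exists>(Q' :: ('r, 'b set set) smod) g'.
          is_kernel TYPE('p) (quotient M L) (quotient N (i ` L)) Q' i' g')
    \<and> is_pullback TYPE('p) M N (quotient M L) (quotient N (i ` L)) i \<pi> \<pi>' i'
    \<and> is_pushout TYPE('p) M N (quotient M L) (quotient N (i ` L)) i \<pi> \<pi>' i'"
proof -
  interpret saturated_embedding_quotient M N i L
    using is_kernel_saturated_embedding[OF normal_mono_i] L_sat
    by (simp add: saturated_embedding_quotient_def saturated_embedding_quotient_axioms_def)
  have i': "i' = induced" unfolding i'_def induced_def by (rule ext) simp
  have "\<exists>(Q' :: ('r, 'b set set) smod) g'.
      is_kernel TYPE('p) (quotient M L) (quotient N (i ` L)) Q' induced g'"
    using saturated_embedding.is_kernel_qclass_image[OF induced_saturated_embedding] by blast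
  then show ?thesis
    unfolding \<pi>_def \<pi>'_def i'
    using image_L_saturated is_cokernel_qclass[OF M L_submodule] is_cokernel_qclass[OF N image_L_submodule]
      induced_qclass is_pullback is_pushout
    by blast
qed

end
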